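(* Consider the genetic algorithm with adaptive population size (APGA) described in the context, with maximum lifetime parameter $MaxLT$ and an arbitrary initial population size $P(0)\ge 1$. Then for every generation $t \ge MaxLT$, $$P(t) \le 2\,MaxLT + 1.$$
   Context: APGA is a steady-state genetic algorithm in which every individual carries a remaining lifetime (RLT). Parameters: an initial population size $P(0)$ and lifetime bounds $1\le MinLT\le MaxLT$; every individual, whether in the initial population or newly created, is assigned at creation a lifetime (its initial RLT) which is a positive integer between $MinLT$ and $MaxLT$ (the assignment may depend on fitness, e.g. via a bi-linear rule, but never exceeds $MaxLT$). Generation $t\ge 1$ proceeds as follows, starting from the population at the end of generation $t-1$: (1) decrement by 1 the RLT of every member except the best (highest-fitness) member of the population; (2) select 2 individuals, apply crossover and mutation to obtain 2 offspring, evaluate them and insert them into the population; (3) remove from the population all members whose RLT equals 0; (4) assign lifetimes (RLT values) to the 2 new members. $P(t)$ denotes the population size at the end of generation $t$, and $P(0)$ the size of the initial population. *)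

theory Defs
  imports Complex_Main
begin

text \<open>A population state is a pair (P, r): the finite set P of members and their
remaining lifetimes r (only the values on P matter).\<close>

text \<open>b is the best member of P: highest fitness, ties broken by the fixed
linear order on individual identifiers (so the best member is unique).\<close>
definition is_best :: "('i::linorder \<Rightarrow> real) \<Rightarrow> 'i set \<Rightarrow> 'i \<Rightarrow> bool" where
  "is_best fit P b \<longleftrightarrow> b \<in> P \<and>
     (\<forall>x\<in>P. x \<noteq> b \<longrightarrow> fit x < fit b \<or> (fit x = fit b \<and> x < b))"

definition apga_step ::
  "('i::linorder \<Rightarrow> real) \<Rightarrow> nat \<Rightarrow> nat \<Rightarrow> 'i set \<Rightarrow> ('i \<Rightarrow> nat)
     \<Rightarrow> 'i set \<Rightarrow> ('i \<Rightarrow> nat) \<Rightarrow> bool" where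
  "apga_step fit MinLT MaxLT P r P' r' \<longleftrightarrow>
     (\<exists>b o1 o2 d.
        is_best fit P b \<and>
        \<comment> \<open>(1) decrement RLT of every member except the best\<close>
        (\<forall>x\<in>P. d x = (if x = b then r x else r x - 1)) \<and>
        \<comment> \<open>(2) two new (distinct, fresh) offspring are inserted\<close>
        o1 \<notin> P \<and> o2 \<notin> P \<and> o1 \<noteq> o2 \<and>
        \<comment> \<open>(3) members with RLT 0 are removed\<close>
        P' = {x\<in>P. d x \<noteq> 0} \<union> {o1, o2} \<and>
        (\<forall>x\<in>P. d x \<noteq> 0 \<longrightarrow> r' x = d x) \<and>
        \<comment> \<open>(4) lifetimes of the new members lie in [MinLT, MaxLT]\<close>
        r' o1 \<in> {MinLT..MaxLT} \<and> r' o2 \<in> {MinLT..MaxLT})"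

text \<open>A run of APGA: pop t is the population at the end of generation t,
rlt t the corresponding remaining lifetimes.\<close>
definition apga_run ::
  "('i::linorder \<Rightarrow> real) \<Rightarrow> nat \<Rightarrow> nat \<Rightarrow> (nat \<Rightarrow> 'i set) \<Rightarrow> (nat \<Rightarrow> 'i \<Rightarrow> nat) \<Rightarrow> bool" where
  "apga_run fit MinLT MaxLT pop rlt \<longleftrightarrow>
     1 \<le> MinLT \<and> MinLT \<le> MaxLT \<and>
     finite (pop 0) \<and> pop 0 \<noteq> {} \<and>
     (\<forall>x\<in>pop 0. rlt 0 x \<in> {MinLT..MaxLT}) \<and>
     (\<forall>t. apga_step fit MinLT MaxLT (pop t) (rlt t) (pop (Suc t)) (rlt (Suc t)))"

end

theory Submission
  imports Defs
begin

text \<open>Every member of the population at generation t was either inserted during one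
of the last MaxLT generations, which accounts for at most 2 MaxLT members, or has been
present throughout generations t - MaxLT, ..., t. Of two distinct such persistent
members the less fit one is never the best, so its remaining lifetime, at most MaxLT
at generation t - MaxLT, drops by one in each of the MaxLT generations and would reach 0
while the individual is still alive. Hence there is at most one persistent member.\<close>

definition fitter :: "('i::linorder \<Rightarrow> real) \<Rightarrow> 'i \<Rightarrow> 'i \<Rightarrow> bool" where
  "fitter fit x y \<longleftrightarrow> fit y < fit x \<or> (fit y = fit x \<and> y < x)"

lemma fitter_asym: "fitter fit x y \<Longrightarrow> \<not> fitter fit y x"
  unfolding fitter_def by auto

lemma fitter_total: "x \<noteq> y \<Longrightarrow> fitter fit x y \<or> fitter fit y x"
  unfolding fitter_def by auto

lemma is_best_iff_fitter: "is_best fit P b \<longleftrightarrow> b \<in> P \<and> (\<forall>x\<in>P. x \<noteq> b \<longrightarrow> fitter fit b x)"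
  unfolding is_best_def fitter_def ..

lemma apga_step_new_members:
  assumes "apga_step fit MinLT MaxLT P r P' r'"
  shows "finite (P' - P)" and "card (P' - P) \<le> 2"
proof -
  obtain o1 o2 where new: "P' - P \<subseteq> {o1, o2}"
    using assms unfolding apga_step_def by blast
  then show "finite (P' - P)"
    using finite_subset by blast
  have "card (P' - P) \<le> card {o1, o2}"
    using new by (intro card_mono) auto
  also have "\<dots> \<le> 2"
    by (simp add: card_insert_if)
  finally show "card (P' - P) \<le> 2" .
qed

lemma apga_step_rlt_range:
  assumes "apga_step fit MinLT MaxLT P r P' r'" and "1 \<le> MinLT"
    and "\<forall>x\<in>P. r x \<in> {1..MaxLT}" and "x \<in> P'"
  shows "r' x \<in> {1..MaxLT}"
proof -
  from assms(1) obtain b o1 o2 d where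
    "\<forall>x\<in>P. d x = (if x = b then r x else r x - 1)"
    "P' = {x\<in>P. d x \<noteq> 0} \<union> {o1, o2}"
    "\<forall>x\<in>P. d x \<noteq> 0 \<longrightarrow> r' x = d x"
    "r' o1 \<in> {MinLT..MaxLT}" "r' o2 \<in> {MinLT..MaxLT}"
    unfolding apga_step_def by blast
  with assms(2-4) show ?thesis by fastforce
qed

lemma apga_step_rlt_dominated:
  assumes "apga_step fit MinLT MaxLT P r P' r'"
    and "x \<in> P" "y \<in> P" "y \<in> P'" "fitter fit x y"
  shows "r' y = r y - 1"
proof -
  from assms(1) obtain b o1 o2 d where
    best: "is_best fit P b" and
    d: "\<forall>x\<in>P. d x = (if x = b then r x else r x - 1)" and
    fresh: "o1 \<notin> P" "o2 \<notin> P" and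
    P': "P' = {x\<in>P. d x \<noteq> 0} \<union> {o1, o2}" and
    r': "\<forall>x\<in>P. d x \<noteq> 0 \<longrightarrow> r' x = d x"
    unfolding apga_step_def by blast
  have "x \<noteq> y"
    using assms(5) fitter_asym by blast
  have "y \<noteq> b"
  proof
    assume "y = b"
    with best assms(2) \<open>x \<noteq> y\<close> have "fitter fit y x"
      unfolding is_best_iff_fitter by blast
    with assms(5) fitter_asym show False by blast
  qed
  with d assms(3) have "d y = r y - 1" by simp
  moreover have "d y \<noteq> 0"
    using P' assms(3,4) fresh by auto
  ultimately show ?thesis
    using r' assms(3) by simp
qed

lemma apga_run_step:
  "apga_run fit MinLT MaxLT pop rlt \<Longrightarrow>
    apga_step fit MinLT MaxLT (pop u) (rlt u) (pop (Suc u)) (rlt (Suc u))"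
  unfolding apga_run_def by blast

lemma apga_run_rlt_range:
  assumes "apga_run fit MinLT MaxLT pop rlt" and "x \<in> pop u"
  shows "rlt u x \<in> {1..MaxLT}"
  using assms(2)
proof (induction u arbitrary: x)
  case 0
  with assms(1) show ?case
    unfolding apga_run_def by force
next
  case (Suc u)
  moreover have "1 \<le> MinLT"
    using assms(1) unfolding apga_run_def by simp
  ultimately show ?case
    using apga_step_rlt_range[OF apga_run_step[OF assms(1)]] by blast
qed

lemma apga_run_rlt_dominated:
  assumes run: "apga_run fit MinLT MaxLT pop rlt"
    and alive: "\<forall>j\<le>k. x \<in> pop (s + j) \<and> y \<in> pop (s + j)"
    and "fitter fit x y"
  shows "rlt (s + k) y + k = rlt s y"
  using alive
proof (induction k)
  case 0
  show ?case by simp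
next
  case (Suc k)
  have "x \<in> pop (s + k)" "y \<in> pop (s + k)" "y \<in> pop (Suc (s + k))"
    using Suc.prems by (auto dest: spec[of _ k] spec[of _ "Suc k"])
  then have "rlt (Suc (s + k)) y = rlt (s + k) y - 1"
    using apga_step_rlt_dominated[OF apga_run_step[OF run]] \<open>fitter fit x y\<close> by blast
  moreover have "rlt (s + k) y \<ge> 1"
    using apga_run_rlt_range[OF run \<open>y \<in> pop (s + k)\<close>] by simp
  moreover have "rlt (s + k) y + k = rlt s y"
    using Suc by simp
  ultimately show ?case by simp
qed

lemma apga_run_persistent_unique:
  assumes run: "apga_run fit MinLT MaxLT pop rlt"
    and "\<forall>j\<le>MaxLT. x \<in> pop (s + j)" and "\<forall>j\<le>MaxLT. y \<in> pop (s + j)"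
  shows "x = y"
proof (rule ccontr)
  have False
    if "fitter fit u v" and alive: "\<forall>j\<le>MaxLT. u \<in> pop (s + j) \<and> v \<in> pop (s + j)" for u v
  proof -
    have "rlt (s + MaxLT) v + MaxLT = rlt s v"
      using apga_run_rlt_dominated[OF run alive \<open>fitter fit u v\<close>] .
    moreover have "v \<in> pop (s + 0)" "v \<in> pop (s + MaxLT)"
      using alive[rule_format, of 0] alive[rule_format, of MaxLT] by simp_all
    then have "rlt s v \<le> MaxLT" "rlt (s + MaxLT) v \<ge> 1"
      using apga_run_rlt_range[OF run] by simp_all
    ultimately show False by linarith
  qed
  moreover assume "x \<noteq> y"
  ultimately show False
    using fitter_total[of x y fit] assms(2,3) by blast
qed

lemma mem_persistent_or_inserted:
  "A (s + k) \<subseteq> (\<Union>j<k. A (Suc (s + j)) - A (s + j)) \<union> {x. \<forall>j\<le>k. x \<in> A (s + j)}"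
proof (induction k)
  case 0
  show ?case by auto
next
  case (Suc k)
  show ?case
  proof
    fix x assume x: "x \<in> A (s + Suc k)"
    show "x \<in> (\<Union>j<Suc k. A (Suc (s + j)) - A (s + j)) \<union> {x. \<forall>j\<le>Suc k. x \<in> A (s + j)}"
    proof (cases "x \<in> A (s + k)")
      case True
      with Suc.IH x show ?thesis
        by (auto simp: le_Suc_eq)
    next
      case False
      with x show ?thesis by auto
    qed
  qed
qed

lemma apga_run_inserted_members:
  assumes "apga_run fit MinLT MaxLT pop rlt"
  shows "finite (\<Union>j<k. pop (Suc (s + j)) - pop (s + j))"
    and "card (\<Union>j<k. pop (Suc (s + j)) - pop (s + j)) \<le> 2 * k"
proof -
  note new_members = apga_step_new_members[OF apga_run_step[OF assms]]
  show "finite (\<Union>j<k. pop (Suc (s + j)) - pop (s + j))"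
    using new_members(1) by blast
  have "card (\<Union>j<k. pop (Suc (s + j)) - pop (s + j))
      \<le> (\<Sum>j<k. card (pop (Suc (s + j)) - pop (s + j)))"
    by (rule card_UN_le) simp
  also have "\<dots> \<le> (\<Sum>j<k. 2)"
    by (intro sum_mono new_members(2))
  finally show "card (\<Union>j<k. pop (Suc (s + j)) - pop (s + j)) \<le> 2 * k"
    by simp
qed

theorem theorem2:
  fixes fit :: "'i::linorder \<Rightarrow> real"
    and pop :: "nat \<Rightarrow> 'i set" and rlt :: "nat \<Rightarrow> 'i \<Rightarrow> nat"
  assumes "apga_run fit MinLT MaxLT pop rlt"
    and "t \<ge> MaxLT"
  shows "card (pop t) \<le> 2 * MaxLT + 1"
proof -
  define s where "s = t - MaxLT"
  define New where "New = (\<Union>j<MaxLT. pop (Suc (s + j)) - pop (s + j))"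
  define Old where "Old = {x. \<forall>j\<le>MaxLT. x \<in> pop (s + j)}"
  have "pop t \<subseteq> New \<union> Old"
    using mem_persistent_or_inserted[of pop s MaxLT] assms(2)
    unfolding New_def Old_def s_def by simp
  moreover have "finite New" and "card New \<le> 2 * MaxLT"
    unfolding New_def using apga_run_inserted_members[OF assms(1)] by blast+
  moreover obtain a where "Old \<subseteq> {a}"
    using apga_run_persistent_unique[OF assms(1)] unfolding Old_def by blast
  then have "finite Old" and "card Old \<le> 1"
    using finite_subset card_mono[of "{a}" Old] by auto
  ultimately have "card (pop t) \<le> card (New \<union> Old)"
    by (intro card_mono) auto
  also have "\<dots> \<le> card New + card Old"
    by (rule card_Un_le)
  finally show ?thesis
    using \<open>card New \<le> 2 * MaxLT\<close> \<open>card Old \<le> 1\<close> by linarith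
qed

end
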